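(* For $a,b>0$ let $\mathrm{Herm}(a,b)$ denote the distribution of $U+2V$, where $U\sim\mathrm{Poisson}(a)$ and $V\sim\mathrm{Poisson}(b)$ are independent. If $0<a\le c$ and $0<b\le d$, then $\mathrm{Herm}(a,b)\le_{wd}\mathrm{Herm}(c,d)$.
   Context: For a real random variable $X$, its Lévy concentration function is $Q_X(\varepsilon)=\sup_{x_0\in\mathbb{R}}\Pr\{X\in[x_0,x_0+\varepsilon]\}$, $\varepsilon>0$. For random variables (or distributions) $X,Y$, write $X\le_{wd}Y$ if $Q_X(\varepsilon)\ge Q_Y(\varepsilon)$ for all $\varepsilon>0$. *)

theory Defs
  imports "HOL-Probability.Probability"
begin

definition levy_conc :: "real measure \<Rightarrow> real \<Rightarrow> real" where
  "levy_conc M \<epsilon> = (SUP x0 \<in> UNIV. measure M {x0..x0 + \<epsilon>})"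

definition wd_le :: "real measure \<Rightarrow> real measure \<Rightarrow> bool" where
  "wd_le M N \<longleftrightarrow> (\<forall>\<epsilon>>0. levy_conc M \<epsilon> \<ge> levy_conc N \<epsilon>)"

definition herm :: "real \<Rightarrow> real \<Rightarrow> real pmf" where
  "herm a b = map_pmf (\<lambda>(u, v). real u + 2 * real v)
                 (pair_pmf (poisson_pmf a) (poisson_pmf b))"

end

theory Submission
  imports Defs
begin

text \<open>Adding an independent random variable can only spread a distribution out: every
  interval probability of X + Y is an average over y of interval probabilities of X, hence
  bounded by the concentration function of X. Since Poisson(a + r) is the law of the sum of
  independent Poisson(a) and Poisson(r) variables, Herm(c, d) is obtained from Herm(a, b) by
  adding an independent Poisson(c - a) variable and twice an independent Poisson(d - b) one.\<close>

lemma measure_le_levy_conc: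
  assumes "finite_measure M"
  shows "measure M {x0..x0 + e} \<le> levy_conc M e"
proof -
  have "bdd_above (range (\<lambda>x. measure M {x..x + e}))"
    using finite_measure.bounded_measure[OF assms] by (intro bdd_aboveI) auto
  then show ?thesis
    unfolding levy_conc_def by (rule cSUP_upper[OF UNIV_I])
qed

lemma levy_conc_nonneg: "finite_measure M \<Longrightarrow> 0 \<le> levy_conc M e"
  using measure_le_levy_conc[of M 0 e] by (meson order_trans measure_nonneg)

lemma map_pmf_pair_pmf_eq_bind:
  "map_pmf h (pair_pmf p q) = bind_pmf q (\<lambda>y. map_pmf (\<lambda>x. h (x, y)) p)"
  unfolding pair_pmf_def map_pmf_def
  by (subst bind_commute_pmf) (simp add: bind_assoc_pmf bind_return_pmf)

lemma levy_conc_add_independent_le: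
  "levy_conc (measure_pmf (map_pmf (\<lambda>(x, y). x + f y) (pair_pmf p q))) e
     \<le> levy_conc (measure_pmf p) e"
proof -
  let ?L = "levy_conc (measure_pmf p) e"
  have "measure (map_pmf (\<lambda>(x, y). x + f y) (pair_pmf p q)) {x0..x0 + e} \<le> ?L" for x0
  proof -
    have "emeasure (map_pmf (\<lambda>(x, y). x + f y) (pair_pmf p q)) {x0..x0 + e}
        = (\<integral>\<^sup>+y. emeasure p {x0 - f y..x0 - f y + e} \<partial>q)"
      unfolding map_pmf_pair_pmf_eq_bind
      by (auto intro!: nn_integral_cong arg_cong2[where f=emeasure])
    also have "\<dots> \<le> (\<integral>\<^sup>+y. ennreal ?L \<partial>q)"
      by (intro nn_integral_mono)
        (simp add: measure_pmf.emeasure_eq_measure measure_le_levy_conc ennreal_leI)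
    also have "\<dots> = ennreal ?L"
      by (simp add: measure_pmf.emeasure_space_1)
    finally show ?thesis
      by (simp add: measure_pmf.emeasure_eq_measure levy_conc_nonneg)
  qed
  then show ?thesis
    unfolding levy_conc_def[of "measure_pmf (map_pmf _ _)"] by (intro cSUP_least) auto
qed

lemma wd_le_add_independent:
  "wd_le (measure_pmf p) (measure_pmf (map_pmf (\<lambda>(x, y). x + f y) (pair_pmf p q)))"
  unfolding wd_le_def by (simp add: levy_conc_add_independent_le)

lemma wd_le_refl: "wd_le M M"
  unfolding wd_le_def by simp

lemma wd_le_trans: "wd_le A B \<Longrightarrow> wd_le B C \<Longrightarrow> wd_le A C"
  unfolding wd_le_def by (meson order_trans)

lemma poisson_pmf_add:
  assumes "0 < a" "0 < r"
  shows "poisson_pmf (a + r) = map_pmf (\<lambda>(u, w). u + w) (pair_pmf (poisson_pmf a) (poisson_pmf r))"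
proof (rule pmf_eqI)
  fix k :: nat
  have "pmf (map_pmf (\<lambda>(u, w). u + w) (pair_pmf (poisson_pmf a) (poisson_pmf r))) k
      = measure (pair_pmf (poisson_pmf a) (poisson_pmf r)) ((\<lambda>(u, w). u + w) -` {k})"
    by (simp add: pmf_map)
  also have "(\<lambda>(u, w). u + w) -` {k} = (\<lambda>u. (u, k - u)) ` {..k}"
    by (auto simp: image_iff)
  also have "measure (pair_pmf (poisson_pmf a) (poisson_pmf r)) \<dots>
      = (\<Sum>u\<le>k. pmf (poisson_pmf a) u * pmf (poisson_pmf r) (k - u))"
    by (subst measure_measure_pmf_finite) (auto simp: sum.reindex inj_on_def pmf_pair)
  also have "\<dots> = exp (-(a + r)) / fact k * (\<Sum>u\<le>k. of_nat (k choose u) * a ^ u * r ^ (k - u))"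
    unfolding sum_distrib_left
  proof (intro sum.cong refl)
    fix u assume "u \<in> {..k}"
    then have "real (k choose u) = fact k / (fact u * fact (k - u))"
      by (simp add: binomial_fact)
    then show "pmf (poisson_pmf a) u * pmf (poisson_pmf r) (k - u)
        = exp (-(a + r)) / fact k * (of_nat (k choose u) * a ^ u * r ^ (k - u))"
      using assms by (simp add: exp_diff exp_minus field_simps)
  qed
  also have "\<dots> = pmf (poisson_pmf (a + r)) k"
    using assms by (simp add: binomial_ring)
  finally show "pmf (poisson_pmf (a + r)) k
      = pmf (map_pmf (\<lambda>(u, w). u + w) (pair_pmf (poisson_pmf a) (poisson_pmf r))) k"
    by simp
qed

lemma herm_add_first:
  assumes "0 < a" "0 < r"
  shows "herm (a + r) b = map_pmf (\<lambda>(x, w). x + real w) (pair_pmf (herm a b) (poisson_pmf r))"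
  unfolding herm_def poisson_pmf_add[OF assms] map_pmf_pair_pmf_eq_bind
  by (simp add: pair_pmf_def map_pmf_def bind_assoc_pmf bind_return_pmf)
    (subst bind_commute_pmf, simp add: algebra_simps)

lemma herm_add_second:
  assumes "0 < b" "0 < s"
  shows "herm a (b + s) = map_pmf (\<lambda>(x, w). x + 2 * real w) (pair_pmf (herm a b) (poisson_pmf s))"
  unfolding herm_def poisson_pmf_add[OF assms] map_pmf_pair_pmf_eq_bind
  by (simp add: pair_pmf_def map_pmf_def bind_assoc_pmf bind_return_pmf algebra_simps)

lemma wd_le_herm_mono_first:
  assumes "0 < a" "a \<le> c"
  shows "wd_le (measure_pmf (herm a b)) (measure_pmf (herm c b))"
proof (cases "a = c")
  case False
  with assms have "herm c b = herm (a + (c - a)) b" "0 < c - a"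
    by simp_all
  with assms(1) show ?thesis
    by (simp only: herm_add_first wd_le_add_independent)
qed (simp add: wd_le_refl)

lemma wd_le_herm_mono_second:
  assumes "0 < b" "b \<le> d"
  shows "wd_le (measure_pmf (herm a b)) (measure_pmf (herm a d))"
proof (cases "b = d")
  case False
  with assms have "herm a d = herm a (b + (d - b))" "0 < d - b"
    by simp_all
  with assms(1) show ?thesis
    by (simp only: herm_add_second wd_le_add_independent)
qed (simp add: wd_le_refl)

theorem mainTheorem11:
  fixes a b c d :: real
  assumes "0 < a" "a \<le> c" "0 < b" "b \<le> d"
  shows "wd_le (measure_pmf (herm a b)) (measure_pmf (herm c d))"
  using wd_le_herm_mono_first[OF assms(1,2)] wd_le_herm_mono_second[OF assms(3,4)]
  by (rule wd_le_trans)

end
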